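(* Let $\mathbb{Y}$ be the open mono-dynamics with motor the monoid $(\mathbf{R}_+,+)$ (single object $\bullet$), clock $\bullet^{\mathbf h}=\mathbf{R}_+$ with $d^{\mathbf h}(t)=t+d$, state set $\mathbf{R}_+\times\mathbf{R}$, scansion $\tau(t,a)=t$ and transitions $d^{\mathbb{Y}}(t,a)=\{t+d\}\times[a-d,a+d]$ for $d\in\mathbf R_+$. Then the map sending a function $y\in Lip^1_+$ to the partial function $\mathfrak a_y:t\mapsto(t,y(t))$ on $D_y$ is a bijection from $Lip^1_+$ onto the set $\mathcal S_{\mathbb Y}$ of external parts of realizations of $\mathbb Y$ (the empty function corresponding to the empty realization). In particular $\mathcal S^*_{\mathbb Y}\simeq Lip^1_+\setminus\{\emptyset\}$.
   Context: For an interval $K\subset\mathbf R$, $Lip^1(K)$ is the set of $1$-Lipschitz real functions on $K$. For $c\in[0,+\infty]$, $Lip^1([0,c|)=Lip^1([0,c])\cup Lip^1([0,c[)$ (for $c=+\infty$ this is $Lip^1([0,+\infty[)$; for $c=0$ it is $Lip^1(\{0\})\cup\{\emptyset\}$), and $Lip^1_+=\bigcup_{c\in[0,+\infty]}Lip^1([0,c|)$. A realization of an open mono-dynamics $(\tau:\alpha\looparrowright\mathbf h)$ with one-object motor is a partial function $\mathfrak a$ from $st(\mathbf h)$ to the states, with domain $D$, such that $\tau(\mathfrak a(t))=t$ for $t\in D$, and for every arrow $d$ and instant $t$: if $d^{\mathbf h}(t)\in D$ then $t\in D$ and $\mathfrak a(d^{\mathbf h}(t))\in d^\alpha(\mathfrak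 a(t))$. The empty realization is the empty partial function. *)

theory Defs
  imports "HOL-Analysis.Analysis"
begin

definition Lip1_on :: "real set \<Rightarrow> (real \<Rightarrow> real) \<Rightarrow> bool" where
  "Lip1_on K f \<longleftrightarrow> (\<forall>x\<in>K. \<forall>y\<in>K. \<bar>f x - f y\<bar> \<le> \<bar>x - y\<bar>)"

definition Lip1_plus :: "(real \<Rightarrow> real option) set" where
  "Lip1_plus = {y. ((\<exists>c::real. c \<ge> 0 \<and> (dom y = {0..c} \<or> dom y = {0..<c})) \<or> dom y = {0..})
                   \<and> Lip1_on (dom y) (\<lambda>t. the (y t))}"

definition Y_clock :: "real \<Rightarrow> real \<Rightarrow> real" where
  "Y_clock d t = t + d"

definition Y_states :: "(real \<times> real) set" where
  "Y_states = {0..} \<times> UNIV"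

definition Y_tau :: "real \<times> real \<Rightarrow> real" where
  "Y_tau s = fst s"

definition Y_trans :: "real \<Rightarrow> real \<times> real \<Rightarrow> (real \<times> real) set" where
  "Y_trans d s = {fst s + d} \<times> {snd s - d .. snd s + d}"

definition Y_realization :: "(real \<Rightarrow> (real \<times> real) option) \<Rightarrow> bool" where
  "Y_realization a \<longleftrightarrow>
     dom a \<subseteq> {0..} \<and> ran a \<subseteq> Y_states \<and>
     (\<forall>t\<in>dom a. Y_tau (the (a t)) = t) \<and>
     (\<forall>d::real. d \<ge> 0 \<longrightarrow> (\<forall>t::real. t \<ge> 0 \<longrightarrow> Y_clock d t \<in> dom a \<longrightarrow>
        t \<in> dom a \<and> the (a (Y_clock d t)) \<in> Y_trans d (the (a t))))"

definition realization_of :: "(real \<Rightarrow> real option) \<Rightarrow> (real \<Rightarrow> (real \<times> real) option)" where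
  "realization_of y = (\<lambda>t. map_option (\<lambda>v. (t, v)) (y t))"

end

theory Submission
  imports Defs
begin

text \<open>A realization of Y is forced by the scansion to be the graph t \<mapsto> (t, y t) of a partial
  function y. Reading the transition condition with s = t + d, it says exactly two things about y:
  its domain is closed downwards inside [0,+\<infinity>[, and |y s - y t| \<le> s - t whenever t \<le> s.
  The first property singles out the intervals [0,c], [0,c[ and [0,+\<infinity>[ (according to whether
  the domain is bounded and contains its supremum), the second is 1-Lipschitz continuity.\<close>

lemma nonneg_down_closed_iff:
  fixes S :: "real set"
  shows "S \<subseteq> {0..} \<and> (\<forall>t s. 0 \<le> t \<longrightarrow> t \<le> s \<longrightarrow> s \<in> S \<longrightarrow> t \<in> S) \<longleftrightarrow>
         (\<exists>c\<ge>0. S = {0..c} \<or> S = {0..<c}) \<or> S = {0..}"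
    (is "?closed \<longleftrightarrow> ?interval")
proof
  assume ?interval
  then show ?closed by auto
next
  assume ?closed
  then have nonneg: "S \<subseteq> {0..}" and below: "\<And>t s. 0 \<le> t \<Longrightarrow> t \<le> s \<Longrightarrow> s \<in> S \<Longrightarrow> t \<in> S"
    by auto
  consider "S = {}" | "\<not> bdd_above S" | "S \<noteq> {}" "bdd_above S" by blast
  then show ?interval
  proof cases
    case 1
    then show ?thesis by (intro disjI1 exI[of _ 0]) auto
  next
    case 2
    have "t \<in> S" if "0 \<le> t" for t
    proof -
      from 2 obtain s where "s \<in> S" "t < s"
        unfolding bdd_above_def by (meson not_le)
      with below[OF that] show ?thesis by (meson less_imp_le)
    qed
    with nonneg have "S = {0..}" by auto
    then show ?thesis by blast
  next
    case 3
    define c where "c = Sup S"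
    have upper: "S \<subseteq> {0..c}"
      using nonneg cSup_upper[OF _ \<open>bdd_above S\<close>] by (auto simp: c_def)
    have lower: "{0..<c} \<subseteq> S"
    proof
      fix t assume "t \<in> {0..<c}"
      then obtain s where "s \<in> S" "t < s"
        using less_cSup_iff[OF 3] by (auto simp: c_def)
      with below[of t s] \<open>t \<in> {0..<c}\<close> show "t \<in> S" by auto
    qed
    have "c \<ge> 0"
      using 3 upper by auto
    moreover have "S = {0..c} \<or> S = {0..<c}"
      using upper lower by (cases "c \<in> S") (auto simp: subset_eq le_less)
    ultimately show ?thesis by blast
  qed
qed

lemma Lip1_on_iff_ordered:
  "Lip1_on K f \<longleftrightarrow> (\<forall>t\<in>K. \<forall>s\<in>K. t \<le> s \<longrightarrow> \<bar>f s - f t\<bar> \<le> s - t)"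
  unfolding Lip1_on_def by (metis abs_minus_commute abs_of_nonneg diff_ge_0_iff_ge linear)

lemma all_nonneg_shift_iff:
  "(\<forall>d::real. d \<ge> 0 \<longrightarrow> (\<forall>t. t \<ge> 0 \<longrightarrow> P t (t + d))) \<longleftrightarrow> (\<forall>t s. 0 \<le> t \<longrightarrow> t \<le> s \<longrightarrow> P t s)"
proof
  assume shifted: "\<forall>d::real. d \<ge> 0 \<longrightarrow> (\<forall>t. t \<ge> 0 \<longrightarrow> P t (t + d))"
  show "\<forall>t s. 0 \<le> t \<longrightarrow> t \<le> s \<longrightarrow> P t s"
    using shifted[rule_format, of "s - t" t for s t] by auto
qed auto

lemma dom_realization_of [simp]: "dom (realization_of y) = dom y"
  unfolding realization_of_def dom_def by auto

lemma inj_realization_of: "inj realization_of"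
proof (rule injI)
  fix y z assume "realization_of y = realization_of z"
  then have "map_option (Pair t) (y t) = map_option (Pair t) (z t)" for t
    unfolding realization_of_def by metis
  then show "y = z"
    by (intro ext) (metis option.inj_map_strong prod.inject)
qed

lemma ran_realization_of_Y_states_iff:
  "ran (realization_of y) \<subseteq> Y_states \<longleftrightarrow> dom y \<subseteq> {0..}"
  unfolding ran_def dom_def Y_states_def realization_of_def by auto

lemma Y_tau_realization_of: "t \<in> dom y \<Longrightarrow> Y_tau (the (realization_of y t)) = t"
  unfolding Y_tau_def realization_of_def by auto

lemma realization_of_step_iff:
  assumes "t \<in> dom y" "t + d \<in> dom y"
  shows "the (realization_of y (Y_clock d t)) \<in> Y_trans d (the (realization_of y t))
           \<longleftrightarrow> \<bar>the (y (t + d)) - the (y t)\<bar> \<le> d"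
  using assms unfolding realization_of_def Y_clock_def Y_trans_def by (auto simp: abs_le_iff)

lemma Y_realization_realization_of_iff:
  "Y_realization (realization_of y) \<longleftrightarrow>
     dom y \<subseteq> {0..} \<and>
     (\<forall>t s. 0 \<le> t \<longrightarrow> t \<le> s \<longrightarrow> s \<in> dom y \<longrightarrow> t \<in> dom y \<and> \<bar>the (y s) - the (y t)\<bar> \<le> s - t)"
proof -
  have "(\<forall>d::real. d \<ge> 0 \<longrightarrow> (\<forall>t. t \<ge> 0 \<longrightarrow> Y_clock d t \<in> dom (realization_of y) \<longrightarrow>
          t \<in> dom (realization_of y) \<and> the (realization_of y (Y_clock d t)) \<in> Y_trans d (the (realization_of y t))))
        \<longleftrightarrow> (\<forall>d::real. d \<ge> 0 \<longrightarrow> (\<forall>t. t \<ge> 0 \<longrightarrow> t + d \<in> dom y \<longrightarrow>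
          t \<in> dom y \<and> \<bar>the (y (t + d)) - the (y t)\<bar> \<le> (t + d) - t))"
    using realization_of_step_iff by (simp add: Y_clock_def cong: conj_cong)
  also have "\<dots> \<longleftrightarrow> (\<forall>t s. 0 \<le> t \<longrightarrow> t \<le> s \<longrightarrow> s \<in> dom y \<longrightarrow> t \<in> dom y \<and> \<bar>the (y s) - the (y t)\<bar> \<le> s - t)"
    by (rule all_nonneg_shift_iff)
  finally show ?thesis
    unfolding Y_realization_def using ran_realization_of_Y_states_iff Y_tau_realization_of by auto
qed

lemma Y_realization_realization_of_iff_Lip1_plus: "Y_realization (realization_of y) \<longleftrightarrow> y \<in> Lip1_plus"
  unfolding Y_realization_realization_of_iff Lip1_plus_def mem_Collect_eq Lip1_on_iff_ordered
    nonneg_down_closed_iff[symmetric] by (meson atLeast_iff subsetD)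

lemma Y_realization_eq_graph:
  assumes "Y_realization a"
  shows "a = realization_of (\<lambda>t. map_option snd (a t))"
proof
  fix t
  show "a t = realization_of (\<lambda>t. map_option snd (a t)) t"
  proof (cases "a t")
    case (Some p)
    with assms have "fst p = t"
      unfolding Y_realization_def Y_tau_def by force
    with Some show ?thesis
      by (cases p) (simp add: realization_of_def)
  qed (simp add: realization_of_def)
qed

lemma realization_of_image_Lip1_plus: "realization_of ` Lip1_plus = {a. Y_realization a}"
proof (intro equalityI subsetI)
  fix a assume "a \<in> realization_of ` Lip1_plus"
  then show "a \<in> {a. Y_realization a}"
    using Y_realization_realization_of_iff_Lip1_plus by auto
next
  fix a assume "a \<in> {a. Y_realization a}"
  then have realization: "Y_realization a" by simp
  define y where "y = (\<lambda>t. map_option snd (a t))"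
  have "a = realization_of y"
    using Y_realization_eq_graph[OF realization] by (simp add: y_def)
  moreover from this realization have "y \<in> Lip1_plus"
    using Y_realization_realization_of_iff_Lip1_plus by simp
  ultimately show "a \<in> realization_of ` Lip1_plus" by blast
qed

theorem mainTheorem6:
  shows "bij_betw realization_of Lip1_plus {a. Y_realization a}
       \<and> realization_of Map.empty = Map.empty
       \<and> bij_betw realization_of (Lip1_plus - {Map.empty}) {a. Y_realization a \<and> a \<noteq> Map.empty}"
proof (intro conjI)
  have inj: "inj_on realization_of A" for A
    using inj_realization_of by (rule inj_on_subset) simp
  show "bij_betw realization_of Lip1_plus {a. Y_realization a}"
    unfolding bij_betw_def using inj realization_of_image_Lip1_plus by blast
  show empty: "realization_of Map.empty = Map.empty"
    by (simp add: realization_of_def)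
  have "realization_of ` (Lip1_plus - {Map.empty}) = {a. Y_realization a} - {Map.empty}"
    using inj_realization_of by (simp add: image_set_diff realization_of_image_Lip1_plus empty)
  then show "bij_betw realization_of (Lip1_plus - {Map.empty}) {a. Y_realization a \<and> a \<noteq> Map.empty}"
    unfolding bij_betw_def using inj by auto
qed

end
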